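(* For the RHA process and all $n\ge0$, $j\ge1$, $$H(X^n_j\mid\mathcal G_{\le n})=\log k_n\quad\text{and}\quad I(X^n_j;X^n_{j+1}\mid\mathcal G_{\le n})=0.$$
   Context: Random hierarchical association (RHA) process. Fix positive integers $(k_n)_{n\ge0}$ (perplexities) with $k_{n-1}\le k_n\le k_{n-1}^2$ for all $n\ge1$. On a probability space $(\Omega,\mathcal J,P)$ let, for each $n\ge1$, $(L_{nj},R_{nj})_{j=1}^{k_n}$ be the lexicographically sorted enumeration of a uniformly random $k_n$-element subset of $\{1,\dots,k_{n-1}\}^2$ (each of the $\binom{k_{n-1}^2}{k_n}$ subsets equally likely), independently over $n$. Let $(C_n)_{n\ge0}$ be independent, independent of all $(L_{nj},R_{nj})$, with $C_n$ uniform on $\{1,\dots,k_n\}$. Define strings $Y^0_j=j$ (length 1) for $1\le j\le k_0$ and $Y^n_j=Y^{n-1}_{L_{nj}}Y^{n-1}_{R_{nj}}$ (concatenation). The RHA process is $\mathcal X=Y^0_{C_0}Y^1_{C_1}Y^2_{C_2}\cdots=X_1X_2X_3\cdots$, $X_{k:l}=X_k\cdots X_l$; for $n\ge0$, $j\ge1$, $X^n_j=X_{j2^n:(j+1)2^n-1}$. $\mathcal G_{\le n}=(L_{lj},R_{lj})_{1\le l\le n,\,1\le j\le k_l}$ ($\mathcal G_{\le0}$ trivial). Logarithms are natural; $H(X|Y)=\mathbb E_P[-\log P(X|Y)]$ and $I(X;Y|Z)=H(X|Z)-H(X|Y,Z)$. *)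

theory Defs
  imports "HOL-Probability.Probability"
begin

text \<open>The level-n random subset (for n \<ge> 1) is S n, a subset of pairs; its
  lexicographically sorted enumeration is lex_enum (S n), whose
  (j-1)-th entry (0-based) is the pair (L_nj, R_nj).\<close>

definition lex_less :: "nat \<times> nat \<Rightarrow> nat \<times> nat \<Rightarrow> bool" where
  "lex_less p q \<longleftrightarrow> fst p < fst q \<or> (fst p = fst q \<and> snd p < snd q)"

definition lex_enum :: "(nat \<times> nat) set \<Rightarrow> (nat \<times> nat) list" where
  "lex_enum A = (THE xs. sorted_wrt lex_less xs \<and> set xs = A)"

definition rha_subsets :: "nat \<Rightarrow> nat \<Rightarrow> (nat \<times> nat) set set" where
  "rha_subsets kprev kn = {A. A \<subseteq> {1..kprev} \<times> {1..kprev} \<and> card A = kn}"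

definition rha_vars ::
  "(nat \<Rightarrow> 'a \<Rightarrow> (nat \<times> nat) set) \<Rightarrow> (nat \<Rightarrow> 'a \<Rightarrow> nat) \<Rightarrow> nat + nat \<Rightarrow> 'a \<Rightarrow> (nat \<times> nat) set + nat"
where
  "rha_vars S C i \<omega> = (case i of Inl n \<Rightarrow> Inl (S n \<omega>) | Inr n \<Rightarrow> Inr (C n \<omega>))"

fun rha_Y :: "(nat \<Rightarrow> (nat \<times> nat) set) \<Rightarrow> nat \<Rightarrow> nat \<Rightarrow> nat list" where
  "rha_Y G 0 j = [j]"
| "rha_Y G (Suc n) j =
     (case lex_enum (G (Suc n)) ! (j - 1) of
        (l, r) \<Rightarrow> rha_Y G n l @ rha_Y G n r)"

text \<open>X_i (i \<ge> 1) is the i-th symbol of Y^0_{C_0} Y^1_{C_1} Y^2_{C_2} ...;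
  the first i blocks already contain at least i symbols.\<close>
definition rha_X :: "(nat \<Rightarrow> 'a \<Rightarrow> (nat \<times> nat) set) \<Rightarrow> (nat \<Rightarrow> 'a \<Rightarrow> nat) \<Rightarrow> 'a \<Rightarrow> nat \<Rightarrow> nat" where
  "rha_X S C \<omega> i = concat (map (\<lambda>m. rha_Y (\<lambda>l. S l \<omega>) m (C m \<omega>)) [0..<i]) ! (i - 1)"

definition rha_block :: "(nat \<Rightarrow> 'a \<Rightarrow> (nat \<times> nat) set) \<Rightarrow> (nat \<Rightarrow> 'a \<Rightarrow> nat) \<Rightarrow> nat \<Rightarrow> nat \<Rightarrow> 'a \<Rightarrow> nat list" where
  "rha_block S C n j \<omega> = map (rha_X S C \<omega>) [j * 2 ^ n..<(j + 1) * 2 ^ n]"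

definition rha_G :: "(nat \<Rightarrow> 'a \<Rightarrow> (nat \<times> nat) set) \<Rightarrow> nat \<Rightarrow> 'a \<Rightarrow> (nat \<times> nat) list list" where
  "rha_G S n \<omega> = map (\<lambda>l. lex_enum (S l \<omega>)) [1..<n + 1]"

end

theory Submission
  imports Defs "HOL-Combinatorics.Transposition"
begin

text \<open>Let \<open>2^d \<le> j < 2^(d+1)\<close>. The block \<open>X^n_j\<close> is a level-\<open>n\<close> subword of the word
  \<open>Y^(n+d)\<close> with index \<open>C_(n+d)\<close>, namely \<open>Y^n_c\<close> for the index \<open>c\<close> reached from \<open>C_(n+d)\<close> by
  descending \<open>d\<close> levels; \<open>X^n_(j+1)\<close> is either the next subword of the same word or the first
  level-\<open>n\<close> subword of the word \<open>Y^(n+d+1)\<close> with index \<open>C_(n+d+1)\<close>. The descent only reads the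
  levels above \<open>n\<close>, which are independent of \<open>G_(\<le>n)\<close>. A uniformly random \<open>k_l\<close>-subset of
  \<open>[k_(l-1)]^2\<close> is invariant under permutations of each coordinate, so the pair at a uniform
  index is uniform on \<open>[k_(l-1)]^2\<close>, and so is the pair formed by the right child of one uniform
  index and the left child of an independent one. By induction on \<open>d\<close>, the indices of \<open>X^n_j\<close>
  and \<open>X^n_(j+1)\<close> are independent and uniform on \<open>[k_n]\<close>, and independent of \<open>G_(\<le>n)\<close>.
  Given \<open>G_(\<le>n)\<close> the map \<open>c \<mapsto> Y^n_c\<close> is injective, so the two blocks are conditionally
  independent and uniform on \<open>k_n\<close> words.\<close>

section \<open>Sorted enumerations and the words of the hierarchy\<close>

lemma class_linorder_lex_less: "class.linorder (\<lambda>p q. lex_less p q \<or> p = q) lex_less"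
  by unfold_locales (auto simp: lex_less_def prod_eq_iff)

lemma
  assumes "finite A"
  shows set_lex_enum: "set (lex_enum A) = A"
    and distinct_lex_enum: "distinct (lex_enum A)"
proof -
  have "\<exists>!xs. sorted_wrt lex_less xs \<and> set xs = A"
    using linorder.finite_sorted_distinct_unique[OF class_linorder_lex_less assms]
      linorder.strict_sorted_iff[OF class_linorder_lex_less] by metis
  then have "sorted_wrt lex_less (lex_enum A) \<and> set (lex_enum A) = A"
    unfolding lex_enum_def by (rule theI')
  then show "set (lex_enum A) = A" "distinct (lex_enum A)"
    using linorder.strict_sorted_iff[OF class_linorder_lex_less] by blast+
qed

lemma length_lex_enum: "finite A \<Longrightarrow> length (lex_enum A) = card A"
  using distinct_card distinct_lex_enum set_lex_enum by metis

lemma bij_betw_nth_lex_enum: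
  assumes "finite A"
  shows "bij_betw (\<lambda>c. lex_enum A ! (c - 1)) {1..card A} A"
proof -
  have "bij_betw (\<lambda>c. c - 1) {1..card A} {..<card A}"
    by (rule bij_betw_byWitness[where f'="\<lambda>i. i + 1"]) auto
  moreover have "bij_betw ((!) (lex_enum A)) {..<card A} A"
    using bij_betw_nth[of "lex_enum A" "{..<card A}" A] assms
    by (simp add: distinct_lex_enum length_lex_enum set_lex_enum)
  ultimately show ?thesis
    using bij_betw_trans by (fastforce simp: comp_def)
qed

text \<open>The word \<open>Y^m_c\<close> computed from the list \<open>es\<close> of sorted enumerations, \<open>es ! l\<close> being
  the enumeration of level \<open>l + 1\<close>.\<close>
fun rha_word :: "(nat \<times> nat) list list \<Rightarrow> nat \<Rightarrow> nat \<Rightarrow> nat list" where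
  "rha_word es 0 c = [c]"
| "rha_word es (Suc m) c = (case es ! m ! (c - 1) of (l, r) \<Rightarrow> rha_word es m l @ rha_word es m r)"

lemma length_rha_word [simp]: "length (rha_word es m c) = 2 ^ m"
  by (induction m arbitrary: c) (auto split: prod.split)

lemma rha_word_cong: "(\<And>i. i < m \<Longrightarrow> es ! i = es' ! i) \<Longrightarrow> rha_word es m c = rha_word es' m c"
  by (induction m arbitrary: c) (auto split: prod.split)

lemma rha_word_append: "length es = m \<Longrightarrow> rha_word (es @ es') m = rha_word es m"
  by (intro ext rha_word_cong) (simp add: nth_append)

lemma rha_Y_eq_rha_word: "m \<le> N \<Longrightarrow> rha_Y (\<lambda>l. S l \<omega>) m c = rha_word (rha_G S N \<omega>) m c"
proof (induction m arbitrary: c)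
  case (Suc m)
  have "rha_G S N \<omega> ! m = lex_enum (S (Suc m) \<omega>)"
    using Suc.prems by (simp add: rha_G_def del: upt_Suc)
  then show ?case using Suc by (auto split: prod.split)
qed simp

lemma length_rha_Y: "length (rha_Y G m c) = 2 ^ m"
  by (induction m arbitrary: c) (auto split: prod.split)

text \<open>The index \<open>descend es d t c\<close> of the \<open>t\<close>-th (counting from \<open>0\<close>) subword of level \<open>n\<close> of
  a word of level \<open>n + d\<close> with index \<open>c\<close>, where \<open>es\<close> lists the enumerations from level
  \<open>n + 1\<close> on; the binary digits of \<open>t\<close>, most significant first, say whether to go right.\<close>
fun descend :: "(nat \<times> nat) list list \<Rightarrow> nat \<Rightarrow> nat \<Rightarrow> nat \<Rightarrow> nat" where
  "descend es 0 t c = c"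
| "descend es (Suc d) t c =
     descend es d (t mod 2 ^ d) ((if 2 ^ d \<le> t then snd else fst) (es ! d ! (c - 1)))"

lemma descend_cong: "(\<And>i. i < d \<Longrightarrow> es ! i = es' ! i) \<Longrightarrow> descend es d t c = descend es' d t c"
  by (induction d arbitrary: t c) auto

lemma descend_append: "length es = d \<Longrightarrow> descend (es @ es') d t c = descend es d t c"
  by (rule descend_cong) (simp add: nth_append)

lemma descend_snoc:
  "length es = d \<Longrightarrow>
   descend (es @ [e]) (Suc d) t c = descend es d (t mod 2 ^ d) ((if 2 ^ d \<le> t then snd else fst) (e ! (c - 1)))"
  by hypsubst (simp add: descend_append)

lemma subword_rha_word:
  assumes "t < 2 ^ d" "n + d \<le> length es"
  shows "take (2 ^ n) (drop (t * 2 ^ n) (rha_word es (n + d) c)) = rha_word es n (descend (drop n es) d t c)"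
  using assms
proof (induction d arbitrary: t c)
  case (Suc d)
  obtain l r where lr: "es ! (n + d) ! (c - 1) = (l, r)" by fastforce
  have drop_nth: "drop n es ! d = es ! (n + d)" using Suc.prems by simp
  have split: "rha_word es (n + Suc d) c = rha_word es (n + d) l @ rha_word es (n + d) r"
    using lr by simp
  show ?case
  proof (cases "2 ^ d \<le> t")
    case True
    have t': "t - 2 ^ d < 2 ^ d" using Suc.prems by simp
    have "t * 2 ^ n = 2 ^ (n + d) + (t - 2 ^ d) * 2 ^ n"
      using True by (simp add: algebra_simps power_add diff_mult_distrib)
    then have "drop (t * 2 ^ n) (rha_word es (n + Suc d) c) = drop ((t - 2 ^ d) * 2 ^ n) (rha_word es (n + d) r)"
      unfolding split by simp
    moreover have "t mod 2 ^ d = t - 2 ^ d" using True t' by (simp add: le_mod_geq)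
    ultimately show ?thesis using Suc.IH[OF t'] Suc.prems True drop_nth lr by simp
  next
    case False
    then have "(t + 1) * 2 ^ n \<le> 2 ^ d * 2 ^ n" by (intro mult_le_mono1) simp
    then have "t * 2 ^ n + 2 ^ n \<le> length (rha_word es (n + d) l)"
      by (simp add: power_add algebra_simps)
    then show ?thesis using Suc.IH[of t l] Suc.prems False drop_nth lr unfolding split by simp
  qed
qed simp

lemma nth_concat_pow2_lengths:
  assumes len: "\<And>l. length (ws l) = 2 ^ l" and i: "2 ^ m \<le> i" "i < 2 ^ Suc m"
  shows "concat (map ws [0..<i]) ! (i - 1) = ws m ! (i - 2 ^ m)"
proof -
  have len_prefix: "length (concat (map ws [0..<m'])) = 2 ^ m' - 1" for m'
    by (induction m') (auto simp: len)
  have "m < i" using less_exp[of m] i(1) by linarith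
  then have "[0..<i] = [0..<m] @ [m..<i]" "[m..<i] = m # [Suc m..<i]"
    using upt_add_eq_append[of 0 m "i - m"] by (simp_all add: upt_conv_Cons)
  then have "concat (map ws [0..<i]) = concat (map ws [0..<m]) @ ws m @ concat (map ws [Suc m..<i])"
    by simp
  moreover have "i - 1 - (2 ^ m - 1) = i - 2 ^ m" "\<not> i - 1 < 2 ^ m - 1" "i - 2 ^ m < length (ws m)"
    using i len[of m] one_le_power[of 2 m] by auto
  ultimately show ?thesis using len_prefix[of m] by (simp add: nth_append)
qed

lemma rha_X_eq_nth_rha_Y:
  "2 ^ m \<le> i \<Longrightarrow> i < 2 ^ Suc m \<Longrightarrow> rha_X S C \<omega> i = rha_Y (\<lambda>l. S l \<omega>) m (C m \<omega>) ! (i - 2 ^ m)"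
  unfolding rha_X_def by (rule nth_concat_pow2_lengths) (simp_all add: length_rha_Y)

lemma rha_block_eq_subword:
  assumes j: "2 ^ d \<le> j" "j < 2 ^ Suc d"
  shows "rha_block S C n j \<omega> =
    take (2 ^ n) (drop ((j - 2 ^ d) * 2 ^ n) (rha_Y (\<lambda>l. S l \<omega>) (n + d) (C (n + d) \<omega>)))"
    (is "_ = take _ (drop ?a ?Y)")
proof (rule nth_equalityI)
  have "(j - 2 ^ d + 1) * 2 ^ n \<le> 2 ^ d * 2 ^ n" using j by (intro mult_le_mono1) simp
  then have fits: "?a + 2 ^ n \<le> length ?Y" by (simp add: length_rha_Y power_add algebra_simps)
  then show "length (rha_block S C n j \<omega>) = length (take (2 ^ n) (drop ?a ?Y))"
    unfolding rha_block_def by simp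
  fix p assume "p < length (rha_block S C n j \<omega>)"
  then have p: "p < 2 ^ n" unfolding rha_block_def by simp
  have "2 ^ d * 2 ^ n \<le> j * 2 ^ n" "(j + 1) * 2 ^ n \<le> 2 ^ Suc d * 2 ^ n"
    using j by (intro mult_le_mono1; simp)+
  moreover have "(2::nat) ^ (n + d) = 2 ^ d * 2 ^ n" "(2::nat) ^ Suc (n + d) = 2 ^ Suc d * 2 ^ n"
    "(j + 1) * 2 ^ n = j * 2 ^ n + 2 ^ n"
    by (simp_all add: power_add)
  ultimately have "2 ^ (n + d) \<le> j * 2 ^ n + p" "j * 2 ^ n + p < 2 ^ Suc (n + d)"
    using p by linarith+
  moreover have "j * 2 ^ n + p - 2 ^ (n + d) = ?a + p"
    using j by (simp add: power_add diff_mult_distrib mult.commute[of "2 ^ n"])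
  ultimately have "rha_block S C n j \<omega> ! p = ?Y ! (?a + p)"
    using p by (simp add: rha_block_def rha_X_eq_nth_rha_Y)
  then show "rha_block S C n j \<omega> ! p = take (2 ^ n) (drop ?a ?Y) ! p" using p fits by simp
qed

lemma rha_block_eq_descend:
  assumes j: "2 ^ d \<le> j" "j < 2 ^ Suc d" and N: "n + d \<le> N"
  shows "rha_block S C n j \<omega> =
    rha_word (rha_G S N \<omega>) n (descend (drop n (rha_G S N \<omega>)) d (j - 2 ^ d) (C (n + d) \<omega>))"
proof -
  have "j - 2 ^ d < 2 ^ d" "n + d \<le> length (rha_G S N \<omega>)"
    using j N by (simp_all add: rha_G_def)
  then show ?thesis
    unfolding rha_block_eq_subword[OF j] rha_Y_eq_rha_word[OF N] by (rule subword_rha_word)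
qed

lemma pmf_of_set_eqI_const:
  assumes "finite A" "set_pmf Q \<subseteq> A" "\<And>x. x \<in> A \<Longrightarrow> pmf Q x = c"
  shows "Q = pmf_of_set A"
proof -
  have "A \<noteq> {}" using assms(2) set_pmf_not_empty[of Q] by blast
  have "1 = sum (pmf Q) A" using sum_pmf_eq_1[OF assms(1,2)] by simp
  also have "\<dots> = real (card A) * c" using assms(3) by simp
  finally have "c = 1 / real (card A)" using \<open>A \<noteq> {}\<close> assms(1) by (simp add: field_simps)
  moreover have "pmf Q x = 0" if "x \<notin> A" for x
    using assms(2) that by (auto simp: set_pmf_iff)
  ultimately show ?thesis
    using assms \<open>A \<noteq> {}\<close> by (intro pmf_eqI) (auto simp: indicator_def)
qed

lemma pmf_of_set_times_eqI_transpose_invariant: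
  assumes fin: "finite A" "finite B" and supp: "set_pmf Q \<subseteq> A \<times> B"
    and inv: "\<And>a a' b b'. a \<in> A \<Longrightarrow> a' \<in> A \<Longrightarrow> b \<in> B \<Longrightarrow> b' \<in> B \<Longrightarrow>
      map_pmf (map_prod (Transposition.transpose a a') (Transposition.transpose b b')) Q = Q"
  shows "Q = pmf_of_set (A \<times> B)"
proof -
  obtain a b where ab: "(a, b) \<in> set_pmf Q" using set_pmf_not_empty[of Q] by fast
  have "pmf Q x = pmf Q (a, b)" if "x \<in> A \<times> B" for x
  proof -
    obtain a' b' where x: "x = (a', b')" "a' \<in> A" "b' \<in> B" using \<open>x \<in> A \<times> B\<close> by blast
    let ?\<pi> = "map_prod (Transposition.transpose a a') (Transposition.transpose b b')"
    have "inj ?\<pi>" by (intro prod.inj_map inj_transpose)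
    have "pmf Q x = pmf (map_pmf ?\<pi> Q) (?\<pi> (a, b))"
      using inv[of a a' b b'] ab supp x by auto
    also have "\<dots> = pmf Q (a, b)" by (rule pmf_map_inj'[OF \<open>inj ?\<pi>\<close>])
    finally show ?thesis .
  qed
  then show ?thesis using fin supp by (intro pmf_of_set_eqI_const) auto
qed

lemma map_bind_pmf_eqI_invariant:
  assumes "map_pmf g P = P" and "\<And>x. x \<in> set_pmf P \<Longrightarrow> map_pmf h (F x) = F (g x)"
  shows "map_pmf h (bind_pmf P F) = bind_pmf P F"
proof -
  have "map_pmf h (bind_pmf P F) = bind_pmf P (\<lambda>x. F (g x))"
    using assms(2) by (simp add: map_bind_pmf cong: bind_pmf_cong)
  also have "\<dots> = bind_pmf (map_pmf g P) F" by (simp add: bind_map_pmf)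
  finally show ?thesis using assms(1) by simp
qed

lemma map_image_pmf_of_set_card_subsets:
  assumes "finite U" "k \<le> card U" "bij_betw \<pi> U U"
  shows "map_pmf ((`) \<pi>) (pmf_of_set {A. A \<subseteq> U \<and> card A = k}) = pmf_of_set {A. A \<subseteq> U \<and> card A = k}"
    (is "_ = pmf_of_set ?S")
proof (rule map_pmf_of_set_bij_betw)
  note bij_Pow = bij_betw_image_Pow[OF assms(3)]
  have card_image: "card (\<pi> ` A) = card A" if "A \<subseteq> U" for A
    using assms(3) that by (meson bij_betw_def card_image inj_on_subset)
  have "(`) \<pi> ` ?S \<subseteq> ?S"
  proof
    fix B assume "B \<in> (`) \<pi> ` ?S"
    then obtain A where "A \<in> ?S" "B = \<pi> ` A" by blast
    then show "B \<in> ?S" using bij_betw_imp_surj_on[OF assms(3)] card_image by auto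
  qed
  moreover have "?S \<subseteq> (`) \<pi> ` ?S"
  proof
    fix B assume B: "B \<in> ?S"
    then obtain A where "A \<subseteq> U" "B = \<pi> ` A"
      using bij_betw_imp_surj_on[OF bij_Pow] by (metis (no_types, lifting) Pow_iff imageE mem_Collect_eq)
    then show "B \<in> (`) \<pi> ` ?S" using B card_image by auto
  qed
  ultimately show "bij_betw ((`) \<pi>) ?S ?S"
    by (intro bij_betw_subset[OF bij_Pow]) auto
  show "finite ?S" using assms(1) by (auto intro: finite_subset[of _ "Pow U"])
  obtain A where "A \<subseteq> U" "card A = k" using obtain_subset_with_card_n[OF assms(2)] by metis
  then show "?S \<noteq> {}" by blast
qed

lemma map_pmf_pair_pmf_eq_bind: "map_pmf h (pair_pmf P Q) = bind_pmf P (\<lambda>x. map_pmf (\<lambda>y. h (x, y)) Q)"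
  by (simp add: pair_pmf_def map_bind_pmf map_pmf_def bind_assoc_pmf bind_return_pmf)

lemma map_pmf_pair_pair_fst:
  "map_pmf (\<lambda>(x, z). f x (fst z)) (pair_pmf A (pair_pmf B C)) = map_pmf (\<lambda>(x, y). f x y) (pair_pmf A B)"
proof -
  have "map_pmf (\<lambda>(x, z). f x (fst z)) (pair_pmf A (pair_pmf B C))
      = map_pmf (\<lambda>(x, y). f x y) (map_pmf (apsnd fst) (pair_pmf A (pair_pmf B C)))"
    by (simp add: map_pmf_comp case_prod_unfold)
  also have "map_pmf (apsnd fst) (pair_pmf A (pair_pmf B C)) = pair_pmf A B"
    by (simp add: pair_map_pmf2[symmetric] map_fst_pair_pmf)
  finally show ?thesis .
qed

lemma pmf_map_pmf_pair_tagged: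
  fixes g :: "'z \<Rightarrow> 'u \<Rightarrow> 'w"
  shows "pmf (map_pmf (\<lambda>(z, u). (g z u, z)) (pair_pmf P U)) (w, z) = pmf P z * pmf (map_pmf (g z) U) w"
proof -
  have "pmf (map_pmf (\<lambda>(z, u). (g z u, z)) (pair_pmf P U)) (w, z)
      = (\<integral>z'. pmf (map_pmf (\<lambda>u. (g z' u, z')) U) (w, z) \<partial>measure_pmf P)"
    by (simp add: map_pmf_pair_pmf_eq_bind pmf_bind)
  also have "\<dots> = (\<integral>z'. indicator {z} z' * pmf (map_pmf (g z) U) w \<partial>measure_pmf P)"
  proof (rule Bochner_Integration.integral_cong)
    fix z' :: 'z
    have "inj (\<lambda>w. (w, z'))" by (auto intro: injI)
    then have "pmf (map_pmf (\<lambda>w. (w, z')) (map_pmf (g z') U)) (w, z') = pmf (map_pmf (g z') U) w"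
      by (rule pmf_map_inj')
    moreover have "pmf (map_pmf (\<lambda>u. (g z' u, z')) U) (w, z) = 0" if "z' \<noteq> z"
      using that by (auto simp: pmf_eq_0_set_pmf)
    ultimately show "pmf (map_pmf (\<lambda>u. (g z' u, z')) U) (w, z) = indicator {z} z' * pmf (map_pmf (g z) U) w"
      by (cases "z' = z") (simp_all add: map_pmf_comp)
  qed simp
  also have "\<dots> = pmf P z * pmf (map_pmf (g z) U) w" by (simp add: measure_pmf_single)
  finally show ?thesis .
qed

fun listprod_pmf :: "'a pmf list \<Rightarrow> 'a list pmf" where
  "listprod_pmf [] = return_pmf []"
| "listprod_pmf (p # ps) = map_pmf (\<lambda>(x, xs). x # xs) (pair_pmf p (listprod_pmf ps))"

lemma listprod_pmf_append:
  "listprod_pmf (ps @ qs) = map_pmf (\<lambda>(xs, ys). xs @ ys) (pair_pmf (listprod_pmf ps) (listprod_pmf qs))"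
  by (induction ps)
    (simp_all add: pair_pmf_def map_pmf_def bind_assoc_pmf bind_return_pmf bind_return_pmf')

lemma listprod_pmf_single: "listprod_pmf [p] = map_pmf (\<lambda>x. [x]) p"
  by (simp add: pair_pmf_def map_pmf_def bind_assoc_pmf bind_return_pmf bind_return_pmf')

lemma set_listprod_pmf:
  "xs \<in> set_pmf (listprod_pmf ps) \<Longrightarrow> length xs = length ps \<and> (\<forall>i<length ps. xs ! i \<in> set_pmf (ps ! i))"
proof (induction ps arbitrary: xs)
  case (Cons p ps)
  then obtain x xs' where "xs = x # xs'" "x \<in> set_pmf p" "xs' \<in> set_pmf (listprod_pmf ps)" by auto
  then show ?case using Cons.IH by (auto simp: nth_Cons split: nat.split)
qed simp

lemma pmf_listprod_pmf:
  "pmf (listprod_pmf ps) xs = (if length xs = length ps then (\<Prod>i<length ps. pmf (ps ! i) (xs ! i)) else 0)"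
proof (induction ps arbitrary: xs)
  case Nil then show ?case by (cases xs) (auto simp: indicator_def)
next
  case (Cons p ps)
  show ?case
  proof (cases xs)
    case Nil
    have "pmf (listprod_pmf (p # ps)) [] = 0" by (subst pmf_eq_0_set_pmf) auto
    then show ?thesis using Nil by simp
  next
    case (Cons x xs')
    have "inj (\<lambda>(x :: 'a, xs). x # xs)" by (auto simp: inj_def)
    then have "pmf (listprod_pmf (p # ps)) (x # xs') = pmf (pair_pmf p (listprod_pmf ps)) (x, xs')"
      using pmf_map_inj'[of "\<lambda>(x, xs). x # xs" _ "(x, xs')"] by simp
    then have "pmf (listprod_pmf (p # ps)) (x # xs') = pmf p x * pmf (listprod_pmf ps) xs'"
      by (simp add: pmf_pair)
    moreover have "(\<Prod>i<length (p # ps). pmf ((p # ps) ! i) ((x # xs') ! i))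
        = pmf p x * (\<Prod>i<length ps. pmf (ps ! i) (xs' ! i))"
      by (simp only: length_Cons prod.lessThan_Suc_shift nth_Cons_0 nth_Cons_Suc)
    ultimately show ?thesis using Cons Cons.IH by simp
  qed
qed

lemma pmf_of_set_times:
  assumes "finite A" "finite B" "A \<noteq> {}" "B \<noteq> {}"
  shows "pmf_of_set (A \<times> B) = pair_pmf (pmf_of_set A) (pmf_of_set B)"
proof (rule pmf_eqI)
  fix z :: "'a \<times> 'b"
  show "pmf (pmf_of_set (A \<times> B)) z = pmf (pair_pmf (pmf_of_set A) (pmf_of_set B)) z"
    using assms by (cases z) (simp add: pmf_pair indicator_def card_cartesian_product)
qed

lemma map_pmf_pair_snoc:
  assumes "\<And>s e c. s \<in> set_pmf A \<Longrightarrow> F (s @ [e], c) = \<Psi> s (h e c)"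
  shows "map_pmf F (pair_pmf (map_pmf (\<lambda>(s, e). s @ [e]) (pair_pmf A B)) C)
       = map_pmf (\<lambda>(s, z). \<Psi> s z) (pair_pmf A (map_pmf (\<lambda>(e, c). h e c) (pair_pmf B C)))"
proof -
  have "map_pmf F (pair_pmf (map_pmf (\<lambda>(s, e). s @ [e]) (pair_pmf A B)) C)
      = map_pmf (\<lambda>(s, e, c). F (s @ [e], c)) (pair_pmf A (pair_pmf B C))"
    by (simp add: pair_map_pmf1 pair_pair_pmf map_pmf_comp case_prod_unfold apfst_def map_prod_def)
  also have "\<dots> = map_pmf (\<lambda>(s, e, c). \<Psi> s (h e c)) (pair_pmf A (pair_pmf B C))"
    by (rule map_pmf_cong) (auto simp: assms)
  also have "\<dots> = map_pmf (\<lambda>(s, z). \<Psi> s z) (pair_pmf A (map_pmf (\<lambda>(e, c). h e c) (pair_pmf B C)))"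
    by (simp add: pair_map_pmf2 map_pmf_comp case_prod_unfold apsnd_def map_prod_def)
  finally show ?thesis .
qed

lemma map_pmf_pair_snoc_pair:
  assumes "\<And>s e c c'. s \<in> set_pmf A \<Longrightarrow> F (s @ [e], (c, c')) = \<Psi> s (c, h e c')"
  shows "map_pmf F (pair_pmf (map_pmf (\<lambda>(s, e). s @ [e]) (pair_pmf A B)) (pair_pmf C D))
       = map_pmf (\<lambda>(s, z). \<Psi> s z) (pair_pmf A (pair_pmf C (map_pmf (\<lambda>(e, c'). h e c') (pair_pmf B D))))"
proof -
  have "map_pmf F (pair_pmf (map_pmf (\<lambda>(s, e). s @ [e]) (pair_pmf A B)) (pair_pmf C D))
     = bind_pmf A (\<lambda>s. bind_pmf B (\<lambda>e. bind_pmf C (\<lambda>c. bind_pmf D (\<lambda>c'. return_pmf (\<Psi> s (c, h e c'))))))"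
    using assms by (simp add: pair_pmf_def map_pmf_def bind_assoc_pmf bind_return_pmf cong: bind_pmf_cong)
  also have "\<dots> = bind_pmf A (\<lambda>s. bind_pmf C (\<lambda>c. bind_pmf B (\<lambda>e. bind_pmf D (\<lambda>c'. return_pmf (\<Psi> s (c, h e c'))))))"
    by (subst bind_commute_pmf) (rule refl)
  also have "\<dots> = map_pmf (\<lambda>(s, z). \<Psi> s z) (pair_pmf A (pair_pmf C (map_pmf (\<lambda>(e, c'). h e c') (pair_pmf B D))))"
    by (simp add: pair_pmf_def map_pmf_def bind_assoc_pmf bind_return_pmf)
  finally show ?thesis .
qed

section \<open>Uniform random subsets\<close>

lemma rha_subsets_nonempty: "k' \<le> K\<^sup>2 \<Longrightarrow> rha_subsets K k' \<noteq> {}"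
  using obtain_subset_with_card_n[of k' "{1..K} \<times> {1..K}"]
  by (auto simp: rha_subsets_def card_cartesian_product power2_eq_square)

lemma finite_rha_subsets: "finite (rha_subsets K k')"
  unfolding rha_subsets_def by (rule finite_subset[of _ "Pow ({1..K} \<times> {1..K})"]) auto

lemma rha_subsetsD:
  "A \<in> rha_subsets K k' \<Longrightarrow> finite A \<and> card A = k' \<and> A \<subseteq> {1..K} \<times> {1..K}"
  unfolding rha_subsets_def by (auto intro: finite_subset)

lemma rha_subsets_member_nonempty: "0 < k' \<Longrightarrow> A \<in> rha_subsets K k' \<Longrightarrow> A \<noteq> {}"
  using rha_subsetsD[of A K k'] by auto

lemma set_pmf_of_set_rha_subsets:
  "k' \<le> K\<^sup>2 \<Longrightarrow> set_pmf (pmf_of_set (rha_subsets K k')) = rha_subsets K k'"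
  using finite_rha_subsets rha_subsets_nonempty by simp

lemma map_pmf_of_set_rha_subsets_transpose:
  assumes "k' \<le> K\<^sup>2" "a \<in> {1..K}" "a' \<in> {1..K}" "b \<in> {1..K}" "b' \<in> {1..K}"
  shows "map_pmf ((`) (map_prod (Transposition.transpose a a') (Transposition.transpose b b')))
      (pmf_of_set (rha_subsets K k')) = pmf_of_set (rha_subsets K k')"
proof -
  have "bij_betw (Transposition.transpose x y) {1..K} {1..K}" if "x \<in> {1..K}" "y \<in> {1..K}" for x y
    using that by (intro bij_betw_imageI inj_on_subset[OF inj_transpose]) auto
  then have "bij_betw (map_prod (Transposition.transpose a a') (Transposition.transpose b b'))
      ({1..K} \<times> {1..K}) ({1..K} \<times> {1..K})"
    using assms(2-) by (intro bij_betw_map_prod)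
  then show ?thesis
    unfolding rha_subsets_def using assms(1)
    by (intro map_image_pmf_of_set_card_subsets) (auto simp: card_cartesian_product power2_eq_square)
qed

lemma bind_pmf_of_set_rha_subsets:
  assumes "0 < k'" "k' \<le> K\<^sup>2"
  shows "bind_pmf (pmf_of_set (rha_subsets K k')) pmf_of_set = pmf_of_set ({1..K} \<times> {1..K})"
proof (rule pmf_of_set_times_eqI_transpose_invariant)
  note nonempty = rha_subsets_member_nonempty[OF assms(1)] rha_subsetsD[THEN conjunct1]
  show "set_pmf (bind_pmf (pmf_of_set (rha_subsets K k')) pmf_of_set) \<subseteq> {1..K} \<times> {1..K}"
  proof
    fix x assume "x \<in> set_pmf (bind_pmf (pmf_of_set (rha_subsets K k')) pmf_of_set)"
    then obtain A where "A \<in> rha_subsets K k'" "x \<in> A"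
      using nonempty by (auto simp: set_pmf_of_set_rha_subsets[OF assms(2)])
    then show "x \<in> {1..K} \<times> {1..K}" using rha_subsetsD by blast
  qed
  fix a a' b b' :: nat
  assume abK: "a \<in> {1..K}" "a' \<in> {1..K}" "b \<in> {1..K}" "b' \<in> {1..K}"
  let ?\<pi> = "map_prod (Transposition.transpose a a') (Transposition.transpose b b')"
  have "inj ?\<pi>" by (intro prod.inj_map inj_transpose)
  show "map_pmf ?\<pi> (bind_pmf (pmf_of_set (rha_subsets K k')) pmf_of_set)
      = bind_pmf (pmf_of_set (rha_subsets K k')) pmf_of_set"
  proof (rule map_bind_pmf_eqI_invariant)
    show "map_pmf ((`) ?\<pi>) (pmf_of_set (rha_subsets K k')) = pmf_of_set (rha_subsets K k')"
      using assms(2) abK by (rule map_pmf_of_set_rha_subsets_transpose)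
    fix A assume "A \<in> set_pmf (pmf_of_set (rha_subsets K k'))"
    then show "map_pmf ?\<pi> (pmf_of_set A) = pmf_of_set (?\<pi> ` A)"
      using nonempty \<open>inj ?\<pi>\<close> by (intro map_pmf_of_set_inj)
        (auto simp: set_pmf_of_set_rha_subsets[OF assms(2)] intro: inj_on_subset)
  qed
qed simp_all

lemma map_pmf_cross_bind_pmf_of_set_rha_subsets:
  assumes "0 < k'" "k' \<le> K\<^sup>2"
  shows "map_pmf (\<lambda>(p, q). (snd p, fst q)) (bind_pmf (pmf_of_set (rha_subsets K k')) (\<lambda>A. pmf_of_set (A \<times> A)))
    = pmf_of_set ({1..K} \<times> {1..K})"
proof (rule pmf_of_set_times_eqI_transpose_invariant)
  let ?D = "bind_pmf (pmf_of_set (rha_subsets K k')) (\<lambda>A. pmf_of_set (A \<times> A))"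
  let ?\<phi> = "\<lambda>(p :: nat \<times> nat, q :: nat \<times> nat). (snd p, fst q)"
  note nonempty = rha_subsets_member_nonempty[OF assms(1)] rha_subsetsD[THEN conjunct1]
  show "set_pmf (map_pmf ?\<phi> ?D) \<subseteq> {1..K} \<times> {1..K}"
  proof
    fix x assume "x \<in> set_pmf (map_pmf ?\<phi> ?D)"
    then obtain A p q where "A \<in> rha_subsets K k'" "p \<in> A" "q \<in> A" "x = (snd p, fst q)"
      using nonempty by (auto simp: set_pmf_of_set_rha_subsets[OF assms(2)])
    then show "x \<in> {1..K} \<times> {1..K}" using rha_subsetsD by (fastforce simp: mem_Times_iff)
  qed
  fix a a' b b' :: nat
  assume abK: "a \<in> {1..K}" "a' \<in> {1..K}" "b \<in> {1..K}" "b' \<in> {1..K}"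
  let ?\<sigma> = "Transposition.transpose a a'" and ?\<tau> = "Transposition.transpose b b'"
  let ?\<pi> = "map_prod ?\<tau> ?\<sigma>"
  have "inj (map_prod ?\<pi> ?\<pi>)" by (intro prod.inj_map inj_transpose)
  have invariant: "map_pmf (map_prod ?\<pi> ?\<pi>) ?D = ?D"
  proof (rule map_bind_pmf_eqI_invariant)
    show "map_pmf ((`) ?\<pi>) (pmf_of_set (rha_subsets K k')) = pmf_of_set (rha_subsets K k')"
      using assms(2) abK by (intro map_pmf_of_set_rha_subsets_transpose)
    fix A assume "A \<in> set_pmf (pmf_of_set (rha_subsets K k'))"
    then have "A \<times> A \<noteq> {}" "finite (A \<times> A)"
      using nonempty by (simp_all add: set_pmf_of_set_rha_subsets[OF assms(2)])
    then have "map_pmf (map_prod ?\<pi> ?\<pi>) (pmf_of_set (A \<times> A)) = pmf_of_set (map_prod ?\<pi> ?\<pi> ` (A \<times> A))"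
      using inj_on_subset[OF \<open>inj (map_prod ?\<pi> ?\<pi>)\<close>] by (intro map_pmf_of_set_inj) simp_all
    then show "map_pmf (map_prod ?\<pi> ?\<pi>) (pmf_of_set (A \<times> A)) = pmf_of_set (?\<pi> ` A \<times> ?\<pi> ` A)"
      by (simp only: map_prod_surj_on[OF refl refl])
  qed
  have "map_prod ?\<sigma> ?\<tau> \<circ> ?\<phi> = ?\<phi> \<circ> map_prod ?\<pi> ?\<pi>" by (simp add: fun_eq_iff)
  then have "map_pmf (map_prod ?\<sigma> ?\<tau>) (map_pmf ?\<phi> ?D) = map_pmf ?\<phi> (map_pmf (map_prod ?\<pi> ?\<pi>) ?D)"
    by (simp only: pmf.map_comp)
  then show "map_pmf (map_prod ?\<sigma> ?\<tau>) (map_pmf ?\<phi> ?D) = map_pmf ?\<phi> ?D"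
    by (simp only: invariant)
qed simp_all

lemma map_pmf_nth_lex_enum:
  assumes "finite A" "card A = k'" "0 < k'"
  shows "map_pmf (\<lambda>c. lex_enum A ! (c - 1)) (pmf_of_set {1..k'}) = pmf_of_set A"
  using bij_betw_nth_lex_enum[OF assms(1)] assms by (intro map_pmf_of_set_bij_betw) auto

lemma map_pmf_nth_lex_enum_rha_subsets:
  assumes "0 < k'" "k' \<le> K\<^sup>2"
  shows "map_pmf (\<lambda>(e, c). e ! (c - 1))
      (pair_pmf (map_pmf lex_enum (pmf_of_set (rha_subsets K k'))) (pmf_of_set {1..k'}))
    = pmf_of_set ({1..K} \<times> {1..K})"
proof -
  have "map_pmf (\<lambda>(e, c). e ! (c - 1))
      (pair_pmf (map_pmf lex_enum (pmf_of_set (rha_subsets K k'))) (pmf_of_set {1..k'}))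
    = bind_pmf (pmf_of_set (rha_subsets K k')) (\<lambda>A. map_pmf (\<lambda>c. lex_enum A ! (c - 1)) (pmf_of_set {1..k'}))"
    by (simp add: map_pmf_pair_pmf_eq_bind bind_map_pmf)
  also have "\<dots> = bind_pmf (pmf_of_set (rha_subsets K k')) pmf_of_set"
    using assms by (intro bind_pmf_cong map_pmf_nth_lex_enum)
      (auto simp: set_pmf_of_set_rha_subsets dest: rha_subsetsD)
  also have "\<dots> = pmf_of_set ({1..K} \<times> {1..K})" by (rule bind_pmf_of_set_rha_subsets[OF assms])
  finally show ?thesis .
qed

lemma map_pmf_cross_nth_lex_enum_rha_subsets:
  assumes "0 < k'" "k' \<le> K\<^sup>2"
  shows "map_pmf (\<lambda>(e, (a, b)). (snd (e ! (a - 1)), fst (e ! (b - 1))))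
      (pair_pmf (map_pmf lex_enum (pmf_of_set (rha_subsets K k'))) (pmf_of_set ({1..k'} \<times> {1..k'})))
    = pmf_of_set ({1..K} \<times> {1..K})"
proof -
  let ?\<phi> = "\<lambda>(p :: nat \<times> nat, q :: nat \<times> nat). (snd p, fst q)"
  have "map_pmf (\<lambda>(a, b). (snd (lex_enum A ! (a - 1)), fst (lex_enum A ! (b - 1)))) (pmf_of_set ({1..k'} \<times> {1..k'}))
      = map_pmf ?\<phi> (pmf_of_set (A \<times> A))" if "A \<in> rha_subsets K k'" for A
  proof -
    let ?f = "\<lambda>c. lex_enum A ! (c - 1)"
    have "finite A" "card A = k'" using rha_subsetsD[OF that] by blast+
    then have "map_pmf (map_prod ?f ?f) (pmf_of_set ({1..k'} \<times> {1..k'})) = pmf_of_set (A \<times> A)"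
      using assms(1) bij_betw_nth_lex_enum by (intro map_pmf_of_set_bij_betw bij_betw_map_prod) auto
    moreover have "map_pmf (\<lambda>(a, b). (snd (?f a), fst (?f b))) (pmf_of_set ({1..k'} \<times> {1..k'}))
      = map_pmf ?\<phi> (map_pmf (map_prod ?f ?f) (pmf_of_set ({1..k'} \<times> {1..k'})))"
      by (simp add: pmf.map_comp comp_def case_prod_unfold)
    ultimately show ?thesis by simp
  qed
  then have "map_pmf (\<lambda>(e, (a, b)). (snd (e ! (a - 1)), fst (e ! (b - 1))))
      (pair_pmf (map_pmf lex_enum (pmf_of_set (rha_subsets K k'))) (pmf_of_set ({1..k'} \<times> {1..k'})))
    = bind_pmf (pmf_of_set (rha_subsets K k')) (\<lambda>A. map_pmf ?\<phi> (pmf_of_set (A \<times> A)))"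
    using assms(2) by (auto simp: map_pmf_pair_pmf_eq_bind bind_map_pmf set_pmf_of_set_rha_subsets intro: bind_pmf_cong)
  also have "\<dots> = map_pmf ?\<phi> (bind_pmf (pmf_of_set (rha_subsets K k')) (\<lambda>A. pmf_of_set (A \<times> A)))"
    by (simp add: map_bind_pmf)
  also have "\<dots> = pmf_of_set ({1..K} \<times> {1..K})"
    by (rule map_pmf_cross_bind_pmf_of_set_rha_subsets[OF assms])
  finally show ?thesis .
qed

section \<open>Law of the subword indices\<close>

definition enum_pmf :: "(nat \<Rightarrow> nat) \<Rightarrow> nat \<Rightarrow> (nat \<times> nat) list pmf" where
  "enum_pmf k l = map_pmf lex_enum (pmf_of_set (rha_subsets (k (l - 1)) (k l)))"

definition index_pmf :: "(nat \<Rightarrow> nat) \<Rightarrow> nat \<Rightarrow> nat pmf" where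
  "index_pmf k l = pmf_of_set {1..k l}"

definition index_pair_pmf :: "(nat \<Rightarrow> nat) \<Rightarrow> nat \<Rightarrow> (nat \<times> nat) pmf" where
  "index_pair_pmf k l = pmf_of_set ({1..k l} \<times> {1..k l})"

definition enums_pmf :: "(nat \<Rightarrow> nat) \<Rightarrow> nat \<Rightarrow> nat \<Rightarrow> (nat \<times> nat) list list pmf" where
  "enums_pmf k n d = listprod_pmf (map (enum_pmf k) [Suc n..<Suc (n + d)])"

lemma enums_pmf_0: "enums_pmf k n 0 = return_pmf []"
  by (simp add: enums_pmf_def)

lemma enums_pmf_Suc:
  "enums_pmf k n (Suc d) = map_pmf (\<lambda>(s, e). s @ [e]) (pair_pmf (enums_pmf k n d) (enum_pmf k (Suc (n + d))))"
proof -
  have "[Suc n..<Suc (n + Suc d)] = [Suc n..<Suc (n + d)] @ [Suc (n + d)]" by simp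
  then show ?thesis
    unfolding enums_pmf_def
    by (simp del: listprod_pmf.simps upt_Suc
      add: listprod_pmf_append listprod_pmf_single pair_map_pmf2 map_pmf_comp case_prod_unfold)
qed

lemma length_of_set_enums_pmf: "s \<in> set_pmf (enums_pmf k n d) \<Longrightarrow> length s = d"
  unfolding enums_pmf_def using set_listprod_pmf by fastforce

definition rha_G_pmf :: "(nat \<Rightarrow> nat) \<Rightarrow> nat \<Rightarrow> (nat \<times> nat) list list pmf" where
  "rha_G_pmf k n = listprod_pmf (map (enum_pmf k) [1..<Suc n])"

lemma rha_G_pmf_add:
  "rha_G_pmf k (n + d) = map_pmf (\<lambda>(g, s). g @ s) (pair_pmf (rha_G_pmf k n) (enums_pmf k n d))"
proof -
  have "[1..<Suc (n + d)] = [1..<Suc n] @ [Suc n..<Suc (n + d)]"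
    using upt_add_eq_append[of 1 "Suc n" d] by simp
  then show ?thesis unfolding rha_G_pmf_def enums_pmf_def by (simp only: map_append listprod_pmf_append)
qed

lemma length_of_set_rha_G_pmf: "g \<in> set_pmf (rha_G_pmf k n) \<Longrightarrow> length g = n"
  unfolding rha_G_pmf_def using set_listprod_pmf by fastforce

lemma map_pmf_rha_words_of_indices:
  assumes V: "map_pmf (\<lambda>(s, cc). V s cc) (pair_pmf (enums_pmf k n d) CC) = index_pair_pmf k n"
  shows "map_pmf (\<lambda>(es, cc). (rha_word es n (fst (V (drop n es) cc)), rha_word es n (snd (V (drop n es) cc)), take n es))
      (pair_pmf (rha_G_pmf k (n + d)) CC)
    = map_pmf (\<lambda>(g, (v, v')). (rha_word g n v, rha_word g n v', g)) (pair_pmf (rha_G_pmf k n) (index_pair_pmf k n))"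
proof -
  let ?G = "rha_G_pmf k n" and ?E = "enums_pmf k n d"
  have "map_pmf (\<lambda>(es, cc). (rha_word es n (fst (V (drop n es) cc)), rha_word es n (snd (V (drop n es) cc)), take n es))
      (pair_pmf (rha_G_pmf k (n + d)) CC)
    = map_pmf (\<lambda>(g, s, cc). (rha_word (g @ s) n (fst (V (drop n (g @ s)) cc)),
        rha_word (g @ s) n (snd (V (drop n (g @ s)) cc)), take n (g @ s)))
        (pair_pmf ?G (pair_pmf ?E CC))"
    by (simp add: rha_G_pmf_add pair_map_pmf1 pair_pair_pmf map_pmf_comp case_prod_unfold)
  also have "\<dots> = map_pmf (\<lambda>(g, w). (rha_word g n (fst w), rha_word g n (snd w), g))
      (pair_pmf ?G (map_pmf (\<lambda>(s, cc). V s cc) (pair_pmf ?E CC)))"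
    unfolding pair_map_pmf2 map_pmf_comp
    by (rule map_pmf_cong) (auto simp: rha_word_append dest: length_of_set_rha_G_pmf)
  finally show ?thesis unfolding V by (simp add: case_prod_unfold)
qed

locale perplexities =
  fixes k :: "nat \<Rightarrow> nat"
  assumes k_pos: "\<And>l. 0 < k l" and k_upper: "\<And>l. k (Suc l) \<le> (k l)\<^sup>2"
begin

lemma index_pair_pmf_eq_pair: "index_pair_pmf k l = pair_pmf (index_pmf k l) (index_pmf k l)"
  unfolding index_pair_pmf_def index_pmf_def using k_pos[of l] by (intro pmf_of_set_times) auto

lemma map_pmf_enum_at_index:
  "map_pmf (\<lambda>(e, c). e ! (c - 1)) (pair_pmf (enum_pmf k (Suc l)) (index_pmf k (Suc l))) = index_pair_pmf k l"
  unfolding enum_pmf_def index_pmf_def index_pair_pmf_def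
  using map_pmf_nth_lex_enum_rha_subsets[OF k_pos k_upper] by simp

lemma map_pmf_cross_enum_at_indices:
  "map_pmf (\<lambda>(e, (a, b)). (snd (e ! (a - 1)), fst (e ! (b - 1))))
     (pair_pmf (enum_pmf k (Suc l)) (index_pair_pmf k (Suc l))) = index_pair_pmf k l"
  unfolding enum_pmf_def index_pair_pmf_def
  using map_pmf_cross_nth_lex_enum_rha_subsets[OF k_pos k_upper] by simp

lemma map_pmf_child_at_index:
  "map_pmf (\<lambda>(e, c). (if b then snd else fst) (e ! (c - 1))) (pair_pmf (enum_pmf k (Suc l)) (index_pmf k (Suc l)))
    = index_pmf k l"
proof -
  have "map_pmf (\<lambda>(e, c). (if b then snd else fst) (e ! (c - 1))) (pair_pmf (enum_pmf k (Suc l)) (index_pmf k (Suc l)))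
     = map_pmf (if b then snd else fst)
         (map_pmf (\<lambda>(e, c). e ! (c - 1)) (pair_pmf (enum_pmf k (Suc l)) (index_pmf k (Suc l))))"
    by (cases b) (simp_all add: map_pmf_comp case_prod_unfold)
  also have "\<dots> = index_pmf k l"
    unfolding map_pmf_enum_at_index index_pair_pmf_eq_pair by (simp add: map_fst_pair_pmf map_snd_pair_pmf)
  finally show ?thesis .
qed

lemma boundary_indices_uniform:
  "map_pmf (\<lambda>(s, (a, b)). (descend s d (2 ^ d - 1) a, descend s d 0 b))
     (pair_pmf (enums_pmf k n d) (index_pair_pmf k (n + d))) = index_pair_pmf k n"
proof (induction d)
  case 0
  show ?case by (simp add: enums_pmf_0 pair_return_pmf1 map_pmf_comp case_prod_unfold)
next
  case (Suc d)
  have "(2 ^ Suc d - 1) mod 2 ^ d = 2 ^ d - (1::nat)" "2 ^ d \<le> 2 ^ Suc d - (1::nat)"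
    using one_le_power[of 2 d] by (simp_all add: le_mod_geq)
  then have "map_pmf (\<lambda>(s, (a, b)). (descend s (Suc d) (2 ^ Suc d - 1) a, descend s (Suc d) 0 b))
      (pair_pmf (enums_pmf k n (Suc d)) (index_pair_pmf k (n + Suc d)))
    = map_pmf (\<lambda>(s, z). case z of (a, b) \<Rightarrow> (descend s d (2 ^ d - 1) a, descend s d 0 b))
        (pair_pmf (enums_pmf k n d) (map_pmf (\<lambda>(e, c). case c of (a, b) \<Rightarrow> (snd (e ! (a - 1)), fst (e ! (b - 1))))
           (pair_pmf (enum_pmf k (Suc (n + d))) (index_pair_pmf k (Suc (n + d))))))"
    unfolding enums_pmf_Suc add_Suc_right
    by (intro map_pmf_pair_snoc)
      (auto simp del: descend.simps(2) simp add: descend_snoc length_of_set_enums_pmf)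
  also have "\<dots> = index_pair_pmf k n"
    using map_pmf_cross_enum_at_indices[of "n + d"] Suc.IH by simp
  finally show ?case .
qed

lemma adjacent_indices_uniform:
  "Suc t < 2 ^ d \<Longrightarrow>
   map_pmf (\<lambda>(s, c). (descend s d t c, descend s d (Suc t) c)) (pair_pmf (enums_pmf k n d) (index_pmf k (n + d)))
     = index_pair_pmf k n"
proof (induction d arbitrary: t)
  case 0
  then show ?case by simp
next
  case (Suc d)
  let ?E = "pair_pmf (enum_pmf k (Suc (n + d))) (index_pmf k (Suc (n + d)))"
  show ?case
  proof (cases "Suc t = 2 ^ d")
    case False
    let ?b = "2 ^ d \<le> t" and ?t' = "t mod 2 ^ d"
    have halves: "Suc t mod 2 ^ d = Suc ?t'" "2 ^ d \<le> Suc t \<longleftrightarrow> ?b" "Suc ?t' < 2 ^ d"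
      using False Suc.prems by (cases ?b; simp add: le_mod_geq Suc_diff_le)+
    have "map_pmf (\<lambda>(s, c). (descend s (Suc d) t c, descend s (Suc d) (Suc t) c))
        (pair_pmf (enums_pmf k n (Suc d)) (index_pmf k (n + Suc d)))
      = map_pmf (\<lambda>(s, z). (descend s d ?t' z, descend s d (Suc ?t') z))
          (pair_pmf (enums_pmf k n d) (map_pmf (\<lambda>(e, c). (if ?b then snd else fst) (e ! (c - 1))) ?E))"
      unfolding enums_pmf_Suc add_Suc_right
      by (intro map_pmf_pair_snoc) (simp del: descend.simps(2) add: descend_snoc length_of_set_enums_pmf halves)
    then show ?thesis using Suc.IH[OF halves(3)] by (simp only: map_pmf_child_at_index)
  next
    case True
    then have boundary: "t = 2 ^ d - 1" "t mod 2 ^ d = 2 ^ d - 1" "Suc t mod 2 ^ d = 0" "\<not> 2 ^ d \<le> 2 ^ d - Suc 0"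
      by simp_all
    have "map_pmf (\<lambda>(s, c). (descend s (Suc d) t c, descend s (Suc d) (Suc t) c))
        (pair_pmf (enums_pmf k n (Suc d)) (index_pmf k (n + Suc d)))
      = map_pmf (\<lambda>(s, z). case z of (a, b) \<Rightarrow> (descend s d (2 ^ d - 1) a, descend s d 0 b))
          (pair_pmf (enums_pmf k n d) (map_pmf (\<lambda>(e, c). e ! (c - 1)) ?E))"
      unfolding enums_pmf_Suc add_Suc_right
      by (intro map_pmf_pair_snoc)
        (use True in \<open>auto simp del: descend.simps(2)
          simp add: descend_snoc length_of_set_enums_pmf boundary split: prod.split\<close>)
    then show ?thesis using boundary_indices_uniform by (simp only: map_pmf_enum_at_index)
  qed
qed

lemma map_pmf_same_word_indices:
  assumes "Suc t < 2 ^ d"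
  shows "map_pmf (\<lambda>(s, (c, c')). (descend s d t c, descend s d (Suc t) c))
      (pair_pmf (enums_pmf k n (Suc d)) (pair_pmf (index_pmf k (n + d)) (index_pmf k (Suc (n + d)))))
    = index_pair_pmf k n"
proof -
  have "map_pmf (\<lambda>(s, (c, c')). (descend s d t c, descend s d (Suc t) c))
      (pair_pmf (enums_pmf k n (Suc d)) (pair_pmf (index_pmf k (n + d)) (index_pmf k (Suc (n + d)))))
    = map_pmf (\<lambda>(s, z). (descend s d t (fst z), descend s d (Suc t) (fst z)))
        (pair_pmf (enums_pmf k n d) (pair_pmf (index_pmf k (n + d))
          (map_pmf (\<lambda>(e, c'). c') (pair_pmf (enum_pmf k (Suc (n + d))) (index_pmf k (Suc (n + d)))))))"
    unfolding enums_pmf_Suc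
    by (rule map_pmf_pair_snoc_pair) (auto dest: length_of_set_enums_pmf simp: descend_append)
  also have "\<dots> = map_pmf (\<lambda>(s, c). (descend s d t c, descend s d (Suc t) c)) (pair_pmf (enums_pmf k n d) (index_pmf k (n + d)))"
    by (rule map_pmf_pair_pair_fst)
  also have "\<dots> = index_pair_pmf k n" using adjacent_indices_uniform[OF assms] .
  finally show ?thesis .
qed

lemma map_pmf_next_word_indices:
  "map_pmf (\<lambda>(s, (c, c')). (descend s d (2 ^ d - 1) c, descend s (Suc d) 0 c'))
      (pair_pmf (enums_pmf k n (Suc d)) (pair_pmf (index_pmf k (n + d)) (index_pmf k (Suc (n + d)))))
    = index_pair_pmf k n"
proof -
  have "map_pmf (\<lambda>(s, (c, c')). (descend s d (2 ^ d - 1) c, descend s (Suc d) 0 c'))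
      (pair_pmf (enums_pmf k n (Suc d)) (pair_pmf (index_pmf k (n + d)) (index_pmf k (Suc (n + d)))))
    = map_pmf (\<lambda>(s, z). case z of (a, b) \<Rightarrow> (descend s d (2 ^ d - 1) a, descend s d 0 b))
        (pair_pmf (enums_pmf k n d) (pair_pmf (index_pmf k (n + d))
          (map_pmf (\<lambda>(e, c'). (if False then snd else fst) (e ! (c' - 1)))
            (pair_pmf (enum_pmf k (Suc (n + d))) (index_pmf k (Suc (n + d)))))))"
    unfolding enums_pmf_Suc
    by (rule map_pmf_pair_snoc_pair)
      (auto dest: length_of_set_enums_pmf simp del: descend.simps(2) simp: descend_snoc descend_append)
  also have "\<dots> = map_pmf (\<lambda>(s, z). case z of (a, b) \<Rightarrow> (descend s d (2 ^ d - 1) a, descend s d 0 b))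
      (pair_pmf (enums_pmf k n d) (index_pair_pmf k (n + d)))"
    by (simp only: map_pmf_child_at_index index_pair_pmf_eq_pair)
  also have "\<dots> = index_pair_pmf k n"
    using boundary_indices_uniform by (simp add: case_prod_unfold)
  finally show ?thesis .
qed

lemma lex_enum_of_set_enum_pmf:
  assumes "e \<in> set_pmf (enum_pmf k (Suc l))"
  obtains A where "A \<in> rha_subsets (k l) (k (Suc l))" "e = lex_enum A"
  using assms finite_rha_subsets rha_subsets_nonempty[OF k_upper]
  unfolding enum_pmf_def by auto

lemma finite_set_rha_G_pmf: "finite (set_pmf (rha_G_pmf k n))"
proof (rule finite_subset)
  let ?B = "\<Union>l<n. set_pmf (enum_pmf k (Suc l))"
  show "set_pmf (rha_G_pmf k n) \<subseteq> {xs. set xs \<subseteq> ?B \<and> length xs \<le> n}"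
    using set_listprod_pmf unfolding rha_G_pmf_def
    by (fastforce simp del: upt_Suc simp: in_set_conv_nth)
  show "finite {xs. set xs \<subseteq> ?B \<and> length xs \<le> n}"
    using finite_rha_subsets rha_subsets_nonempty[OF k_upper]
    by (intro finite_lists_length_le) (auto simp: enum_pmf_def)
qed

lemma inj_on_rha_word:
  assumes g: "g \<in> set_pmf (rha_G_pmf k n)"
  shows "inj_on (rha_word g n) {1..k n}"
proof -
  have "inj_on (rha_word g m) {1..k m}" if "m \<le> n" for m
    using that
  proof (induction m)
    case 0
    then show ?case by (auto simp: inj_on_def)
  next
    case (Suc m)
    have "g ! m \<in> set_pmf (enum_pmf k (Suc m))"
      using set_listprod_pmf[OF g[unfolded rha_G_pmf_def]] Suc.prems by (auto simp del: upt_Suc)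
    then obtain A where A: "A \<in> rha_subsets (k m) (k (Suc m))" "g ! m = lex_enum A"
      by (rule lex_enum_of_set_enum_pmf)
    then have fin: "finite A" and card: "card A = k (Suc m)" and sub: "A \<subseteq> {1..k m} \<times> {1..k m}"
      using rha_subsetsD by blast+
    have bij: "bij_betw (\<lambda>c. g ! m ! (c - 1)) {1..k (Suc m)} A"
      using bij_betw_nth_lex_enum[OF fin] A(2) card by simp
    have IH: "inj_on (rha_word g m) {1..k m}" using Suc by simp
    show ?case
    proof (rule inj_onI)
      fix c c' assume c: "c \<in> {1..k (Suc m)}" and c': "c' \<in> {1..k (Suc m)}"
        and eq: "rha_word g (Suc m) c = rha_word g (Suc m) c'"
      obtain a b a' b' where ab: "g ! m ! (c - 1) = (a, b)" and ab': "g ! m ! (c' - 1) = (a', b')"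
        by fastforce
      have "(a, b) \<in> A" "(a', b') \<in> A"
        using bij_betw_apply[OF bij c] bij_betw_apply[OF bij c'] ab ab' by simp_all
      moreover have "rha_word g m a = rha_word g m a'" "rha_word g m b = rha_word g m b'"
        using eq ab ab' by (simp_all add: append_eq_append_conv)
      ultimately have "g ! m ! (c - 1) = g ! m ! (c' - 1)"
        using IH sub ab ab' by (auto dest: inj_onD)
      then show "c = c'" using bij_betw_imp_inj_on[OF bij] c c' by (auto dest: inj_onD)
    qed
  qed
  then show ?thesis by simp
qed

end

section \<open>Information of conditionally uniform pairs\<close>

lemma (in prob_space) distr_comp_eq_map_pmf:
  assumes "T \<in> measurable M (count_space UNIV)" "distr M (count_space UNIV) T = measure_pmf Q"
  shows "distr M (count_space UNIV) (\<lambda>\<omega>. h (T \<omega>)) = measure_pmf (map_pmf h Q)"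
proof -
  have "distr M (count_space UNIV) (\<lambda>\<omega>. h (T \<omega>)) = distr (distr M (count_space UNIV) T) (count_space UNIV) h"
    using distr_distr[of h "count_space UNIV" "count_space UNIV" T M] assms(1) by (simp add: comp_def)
  then show ?thesis unfolding assms(2) by (simp add: map_pmf_rep_eq)
qed

lemma (in prob_space) distributed_comp_pmf:
  assumes "T \<in> measurable M (count_space UNIV)" "distr M (count_space UNIV) T = measure_pmf Q"
  shows "distributed M (count_space UNIV) (\<lambda>\<omega>. h (T \<omega>)) (\<lambda>x. ennreal (pmf (map_pmf h Q) x))"
  unfolding distributed_def
  using distr_comp_eq_map_pmf[OF assms] measurable_compose[OF assms(1), of h]
  by (simp add: measure_pmf_eq_density)

lemma integrable_count_space_finite_support:
  fixes f :: "'a \<Rightarrow> real"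
  assumes "finite {x. f x \<noteq> 0}"
  shows "integrable (count_space UNIV) f"
proof -
  have eq: "f = (\<lambda>x. \<Sum>a\<in>{x. f x \<noteq> 0}. indicator {a} x * f a)"
  proof
    fix x show "f x = (\<Sum>a\<in>{x. f x \<noteq> 0}. indicator {a} x * f a)"
      using assms by (cases "f x = 0") (auto simp: indicator_def sum.delta' cong: sum.cong)
  qed
  have "integrable (count_space UNIV) (\<lambda>x. \<Sum>a\<in>{x. f x \<noteq> 0}. indicator {a} x * f a)"
    by (intro Bochner_Integration.integrable_sum integrable_mult_left integrable_real_indicator) simp_all
  then show ?thesis by (simp only: eq[symmetric])
qed

lemma count_space_pair_measure_UNIV:
  "count_space (UNIV :: 'a :: countable set) \<Otimes>\<^sub>M count_space (UNIV :: 'b :: countable set) = count_space UNIV"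
  by (simp add: pair_measure_countable)

definition cond_uniform_pmf :: "'z pmf \<Rightarrow> ('z \<Rightarrow> 'v \<Rightarrow> 'x) \<Rightarrow> 'v set \<Rightarrow> ('x \<times> 'x \<times> 'z) pmf" where
  "cond_uniform_pmf Pz f V = map_pmf (\<lambda>(z, (v, v')). (f z v, f z v', z)) (pair_pmf Pz (pmf_of_set (V \<times> V)))"

lemma map_pmf_cond_uniform_pmf:
  "map_pmf (\<lambda>(x, y, z). (x, z)) (cond_uniform_pmf Pz f V)
    = map_pmf (\<lambda>(z, u). (f z (fst u), z)) (pair_pmf Pz (pmf_of_set (V \<times> V)))"
  "map_pmf (\<lambda>(x, y, z). (y, z)) (cond_uniform_pmf Pz f V)
    = map_pmf (\<lambda>(z, u). (f z (snd u), z)) (pair_pmf Pz (pmf_of_set (V \<times> V)))"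
  "map_pmf (\<lambda>(x, y, z). z) (cond_uniform_pmf Pz f V) = Pz"
  unfolding cond_uniform_pmf_def by (simp_all add: map_pmf_comp case_prod_unfold map_fst_pair_pmf)

lemma finite_set_cond_uniform_pmf:
  "finite (set_pmf Pz) \<Longrightarrow> finite V \<Longrightarrow> V \<noteq> {} \<Longrightarrow> finite (set_pmf (cond_uniform_pmf Pz f V))"
  unfolding cond_uniform_pmf_def by simp

context
  fixes Pz :: "'z :: countable pmf" and f :: "'z \<Rightarrow> 'v \<Rightarrow> 'x :: countable" and V :: "'v set"
  assumes V: "finite V" "V \<noteq> {}" and inj: "\<And>z. z \<in> set_pmf Pz \<Longrightarrow> inj_on (f z) V"
begin

lemma pmf_cond_uniform_pmf:
  "pmf (cond_uniform_pmf Pz f V) (x, y, z) = pmf Pz z * indicator (f z ` V \<times> f z ` V) (x, y) / real (card V) ^ 2"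
proof (cases "z \<in> set_pmf Pz")
  case True
  let ?g = "\<lambda>z u. (f z (fst u), f z (snd u))"
  have "inj_on (map_prod (f z) (f z)) (V \<times> V)" by (intro map_prod_inj_on inj True)
  moreover have "?g z = map_prod (f z) (f z)" by (auto simp: fun_eq_iff)
  ultimately have "map_pmf (?g z) (pmf_of_set (V \<times> V)) = pmf_of_set (map_prod (f z) (f z) ` (V \<times> V))"
    using V by (simp add: map_pmf_of_set_inj)
  also have "map_prod (f z) (f z) ` (V \<times> V) = f z ` V \<times> f z ` V" by (rule map_prod_surj_on) (rule refl)+
  finally have "map_pmf (?g z) (pmf_of_set (V \<times> V)) = pmf_of_set (f z ` V \<times> f z ` V)" .
  moreover have "pmf (cond_uniform_pmf Pz f V) (x, y, z)
      = pmf (map_pmf (\<lambda>(z, u). (?g z u, z)) (pair_pmf Pz (pmf_of_set (V \<times> V)))) ((x, y), z)"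
  proof -
    have "inj (\<lambda>((x :: 'x, y :: 'x), z :: 'z). (x, y, z))" by (auto intro: injI)
    moreover have "cond_uniform_pmf Pz f V
        = map_pmf (\<lambda>((x, y), z). (x, y, z)) (map_pmf (\<lambda>(z, u). (?g z u, z)) (pair_pmf Pz (pmf_of_set (V \<times> V))))"
      unfolding cond_uniform_pmf_def by (simp add: map_pmf_comp case_prod_unfold)
    ultimately show ?thesis using pmf_map_inj'[of "\<lambda>((x, y), z). (x, y, z)" _ "((x, y), z)"] by simp
  qed
  moreover have "card (f z ` V \<times> f z ` V) = card V ^ 2"
    using card_image[OF inj[OF True]] by (simp add: card_cartesian_product power2_eq_square)
  ultimately show ?thesis using V by (simp add: pmf_map_pmf_pair_tagged indicator_def)
next
  case False
  then have "pmf Pz z = 0" by (simp add: set_pmf_iff)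
  moreover have "pmf (cond_uniform_pmf Pz f V) (x, y, z) = 0"
    using False by (auto simp: pmf_eq_0_set_pmf cond_uniform_pmf_def)
  ultimately show ?thesis by simp
qed

lemma pmf_cond_uniform_pmf_marginal:
  assumes "h = fst \<or> h = snd"
  shows "pmf (map_pmf (\<lambda>(z, u). (f z (h u), z)) (pair_pmf Pz (pmf_of_set (V \<times> V)))) (x, z)
    = pmf Pz z * indicator (f z ` V) x / real (card V)"
proof (cases "z \<in> set_pmf Pz")
  case True
  have "map_pmf h (pmf_of_set (V \<times> V)) = pmf_of_set V"
    using assms V by (auto simp: pmf_of_set_times map_fst_pair_pmf map_snd_pair_pmf)
  then have "map_pmf (\<lambda>u. f z (h u)) (pmf_of_set (V \<times> V)) = pmf_of_set (f z ` V)"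
    using V inj[OF True] by (simp add: map_pmf_comp[symmetric] map_pmf_of_set_inj)
  then show ?thesis
    using V card_image[OF inj[OF True]] by (simp add: pmf_map_pmf_pair_tagged)
qed (simp add: pmf_map_pmf_pair_tagged set_pmf_iff)

context
  fixes M :: "'a measure" and X Y :: "'a \<Rightarrow> 'x" and Z :: "'a \<Rightarrow> 'z"
  assumes prob: "prob_space M"
    and meas: "(\<lambda>\<omega>. (X \<omega>, Y \<omega>, Z \<omega>)) \<in> measurable M (count_space UNIV)"
    and law: "distr M (count_space UNIV) (\<lambda>\<omega>. (X \<omega>, Y \<omega>, Z \<omega>)) = measure_pmf (cond_uniform_pmf Pz f V)"
begin

lemma distributed_cond_uniform_pmf:
  "distributed M (count_space UNIV) Z (\<lambda>z. ennreal (pmf Pz z))"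
  "distributed M (count_space UNIV) X (\<lambda>x. ennreal (pmf (map_pmf (\<lambda>(x, y, z). x) (cond_uniform_pmf Pz f V)) x))"
  "distributed M (count_space UNIV \<Otimes>\<^sub>M count_space UNIV) (\<lambda>\<omega>. (X \<omega>, Z \<omega>))
     (\<lambda>w. ennreal (pmf (map_pmf (\<lambda>(x, y, z). (x, z)) (cond_uniform_pmf Pz f V)) w))"
  "distributed M (count_space UNIV \<Otimes>\<^sub>M count_space UNIV) (\<lambda>\<omega>. (Y \<omega>, Z \<omega>))
     (\<lambda>w. ennreal (pmf (map_pmf (\<lambda>(x, y, z). (y, z)) (cond_uniform_pmf Pz f V)) w))"
  "distributed M (count_space UNIV \<Otimes>\<^sub>M count_space UNIV \<Otimes>\<^sub>M count_space UNIV) (\<lambda>\<omega>. (X \<omega>, Y \<omega>, Z \<omega>))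
     (\<lambda>w. ennreal (pmf (cond_uniform_pmf Pz f V) w))"
  using prob_space.distributed_comp_pmf[OF prob meas law, of "\<lambda>(x, y, z). z"]
    prob_space.distributed_comp_pmf[OF prob meas law, of "\<lambda>(x, y, z). x"]
    prob_space.distributed_comp_pmf[OF prob meas law, of "\<lambda>(x, y, z). (x, z)"]
    prob_space.distributed_comp_pmf[OF prob meas law, of "\<lambda>(x, y, z). (y, z)"]
    prob_space.distributed_comp_pmf[OF prob meas law, of "\<lambda>w. w"]
  by (simp_all add: map_pmf_cond_uniform_pmf(3) count_space_pair_measure_UNIV)

lemma conditional_entropy_cond_uniform_pmf:
  "prob_space.conditional_entropy M (exp 1) (count_space UNIV) (count_space UNIV) X Z = ln (card V)"
proof -
  interpret information_space M "exp 1"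
    by (intro information_space.intro prob) (simp add: information_space_axioms_def)
  let ?QXZ = "map_pmf (\<lambda>(x, y, z). (x, z)) (cond_uniform_pmf Pz f V)"
  have "pmf ?QXZ (x, z) * log (exp 1) (pmf ?QXZ (x, z) / pmf Pz z) = pmf ?QXZ (x, z) * - ln (card V)" for x z
    using V by (cases "pmf Pz z = 0")
      (auto simp: map_pmf_cond_uniform_pmf pmf_cond_uniform_pmf_marginal indicator_def log_def ln_div)
  then have "conditional_entropy (exp 1) (count_space UNIV) (count_space UNIV) X Z
      = - (\<integral>w. pmf ?QXZ w * - ln (card V) \<partial>(count_space UNIV \<Otimes>\<^sub>M count_space UNIV))"
    by (subst conditional_entropy_generic_eq[OF _ _ distributed_cond_uniform_pmf(1) _ distributed_cond_uniform_pmf(3)])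
      (simp_all add: sigma_finite_measure_count_space case_prod_unfold)
  then show ?thesis unfolding count_space_pair_measure_UNIV by (simp add: integral_pmf)
qed

lemma conditional_mutual_information_cond_uniform_pmf:
  assumes "finite (set_pmf Pz)"
  shows "prob_space.conditional_mutual_information M (exp 1) (count_space UNIV) (count_space UNIV) (count_space UNIV)
    X Y Z = 0"
proof -
  interpret information_space M "exp 1"
    by (intro information_space.intro prob) (simp add: information_space_axioms_def)
  let ?Q = "cond_uniform_pmf Pz f V"
  let ?QXZ = "map_pmf (\<lambda>(x, y, z). (x, z)) ?Q" and ?QYZ = "map_pmf (\<lambda>(x, y, z). (y, z)) ?Q"
  have finite_support: "finite {w. F w \<noteq> (0::real)}" if "\<And>w. pmf ?Q w = 0 \<Longrightarrow> F w = 0" for F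
    using finite_set_cond_uniform_pmf[OF assms V, of f] by (rule finite_subset[rotated]) (use that in \<open>auto simp: set_pmf_iff\<close>)
  have "pmf ?QXZ (x, z) = pmf Pz z * indicator (f z ` V) x / real (card V)"
    "pmf ?QYZ (y, z) = pmf Pz z * indicator (f z ` V) y / real (card V)" for x y z
    unfolding map_pmf_cond_uniform_pmf by (simp_all add: pmf_cond_uniform_pmf_marginal)
  then have "pmf ?Q (x, y, z) * log (exp 1) (pmf ?Q (x, y, z) / (pmf ?QXZ (x, z) * (pmf ?QYZ (y, z) / pmf Pz z))) = 0"
    for x y z
    using V by (cases "pmf Pz z = 0") (auto simp: pmf_cond_uniform_pmf indicator_def power2_eq_square)
  then have integrand: "(\<lambda>(x, y, z). pmf ?Q (x, y, z)
      * log (exp 1) (pmf ?Q (x, y, z) / (pmf ?QXZ (x, z) * (pmf ?QYZ (y, z) / pmf Pz z)))) = (\<lambda>_. 0)"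
    by (auto simp: fun_eq_iff)
  have "conditional_mutual_information (exp 1) (count_space UNIV) (count_space UNIV) (count_space UNIV) X Y Z
      = (\<integral>(x, y, z). pmf ?Q (x, y, z) * log (exp 1) (pmf ?Q (x, y, z) / (pmf ?QXZ (x, z) * (pmf ?QYZ (y, z) / pmf Pz z)))
          \<partial>(count_space UNIV \<Otimes>\<^sub>M count_space UNIV \<Otimes>\<^sub>M count_space UNIV))"
    by (rule conditional_mutual_information_generic_eq[OF _ _ _ distributed_cond_uniform_pmf(2) _
          distributed_cond_uniform_pmf(1) _ distributed_cond_uniform_pmf(4) _ distributed_cond_uniform_pmf(3) _
          distributed_cond_uniform_pmf(5)])
      (auto simp: sigma_finite_measure_count_space count_space_pair_measure_UNIV case_prod_unfold
        intro!: integrable_count_space_finite_support finite_support)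
  then show ?thesis unfolding integrand by simp
qed

end

end

section \<open>Joint law of the driving variables\<close>

lemma (in prob_space) distr_eq_measure_pmfI:
  fixes T :: "'a \<Rightarrow> 'b :: countable"
  assumes "T \<in> measurable M (count_space UNIV)" "\<And>v. prob (T -` {v} \<inter> space M) = pmf Q v"
  shows "distr M (count_space UNIV) T = measure_pmf Q"
proof (rule measure_eqI_countable[where A = UNIV])
  fix v :: 'b
  have "emeasure (distr M (count_space UNIV) T) {v} = emeasure M (T -` {v} \<inter> space M)"
    using assms(1) by (simp add: emeasure_distr)
  also have "\<dots> = emeasure (measure_pmf Q) {v}"
    using assms(2) by (simp add: emeasure_eq_measure emeasure_pmf_single)
  finally show "emeasure (distr M (count_space UNIV) T) {v} = emeasure (measure_pmf Q) {v}" .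
qed simp_all

lemma measurable_map_list_count_space:
  assumes "\<And>x. x \<in> set xs \<Longrightarrow> f x \<in> measurable M (count_space UNIV)"
  shows "(\<lambda>\<omega>. map (\<lambda>x. f x \<omega>) xs) \<in> measurable M (count_space (UNIV :: 'b :: countable list set))"
  using assms
proof (induction xs)
  case (Cons x xs)
  then have "(\<lambda>\<omega>. (f x \<omega>, map (\<lambda>x. f x \<omega>) xs)) \<in> measurable M (count_space UNIV \<Otimes>\<^sub>M count_space UNIV)"
    by (intro measurable_Pair) auto
  then have "(\<lambda>\<omega>. (f x \<omega>, map (\<lambda>x. f x \<omega>) xs)) \<in> measurable M (count_space UNIV)"
    by (simp add: pair_measure_countable)
  then have "(\<lambda>\<omega>. (\<lambda>(y, ys). y # ys) (f x \<omega>, map (\<lambda>x. f x \<omega>) xs)) \<in> measurable M (count_space UNIV)"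
    by (rule measurable_compose) simp
  then show ?case by simp
qed simp

locale rha_process = prob_space M + perplexities k
  for M :: "'a measure" and k :: "nat \<Rightarrow> nat" +
  fixes S :: "nat \<Rightarrow> 'a \<Rightarrow> (nat \<times> nat) set" and C :: "nat \<Rightarrow> 'a \<Rightarrow> nat"
  assumes S_rv: "\<And>n. n \<ge> 1 \<Longrightarrow> S n \<in> measurable M (count_space UNIV)"
    and S_distr: "\<And>n. n \<ge> 1 \<Longrightarrow>
       distr M (count_space UNIV) (S n) = measure_pmf (pmf_of_set (rha_subsets (k (n - 1)) (k n)))"
    and C_rv: "\<And>n. C n \<in> measurable M (count_space UNIV)"
    and C_distr: "\<And>n. distr M (count_space UNIV) (C n) = measure_pmf (pmf_of_set {1..k n})"
    and indep: "indep_vars (\<lambda>_. count_space UNIV) (rha_vars S C) (Inl ` {1..} \<union> range Inr)"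
begin

lemma prob_lex_enum_S: "prob (S (Suc l) -` {A. lex_enum A = e} \<inter> space M) = pmf (enum_pmf k (Suc l)) e"
proof -
  have "prob (S (Suc l) -` {A. lex_enum A = e} \<inter> space M)
      = measure (distr M (count_space UNIV) (S (Suc l))) {A. lex_enum A = e}"
    using S_rv[of "Suc l"] by (simp add: measure_distr)
  also have "\<dots> = pmf (enum_pmf k (Suc l)) e"
    unfolding S_distr[of "Suc l", simplified] enum_pmf_def pmf_map by (simp add: vimage_def)
  finally show ?thesis .
qed

lemma prob_C: "prob (C l -` {c} \<inter> space M) = pmf (index_pmf k l) c"
  using C_rv[of l] by (simp add: measure_distr[symmetric] C_distr index_pmf_def measure_pmf_single)

lemma measurable_rha_G_indices:
  "(\<lambda>\<omega>. (rha_G S N \<omega>, C m \<omega>, C (Suc m) \<omega>)) \<in> measurable M (count_space UNIV)"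
proof -
  have "(\<lambda>\<omega>. lex_enum (S l \<omega>)) \<in> measurable M (count_space UNIV)" if "l \<in> set [1..<N + 1]" for l
    using that by (intro measurable_compose[OF S_rv]) auto
  then have "rha_G S N \<in> measurable M (count_space UNIV)"
    unfolding rha_G_def by (rule measurable_map_list_count_space)
  then show ?thesis using C_rv
    by (auto simp: pair_measure_countable[symmetric] intro!: measurable_Pair)
qed

lemma prob_rha_G_indices_eq_prod:
  assumes "length es = N"
  shows "prob ((\<lambda>\<omega>. (rha_G S N \<omega>, C m \<omega>, C (Suc m) \<omega>)) -` {(es, c, c')} \<inter> space M)
    = (\<Prod>l<N. pmf (enum_pmf k (Suc l)) (es ! l)) * pmf (index_pmf k m) c * pmf (index_pmf k (Suc m)) c'"
proof -
  define J :: "(nat + nat) set" where "J = (\<lambda>l. Inl (Suc l)) ` {..<N} \<union> {Inr m, Inr (Suc m)}"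
  define ev where "ev = (\<lambda>i. rha_vars S C i -` (case i of
      Inl l \<Rightarrow> Inl ` {A. lex_enum A = es ! (l - 1)} | Inr r \<Rightarrow> Inr ` {if r = m then c else c'}) \<inter> space M)"
  have "rha_G S N \<omega> = es \<longleftrightarrow> (\<forall>l<N. lex_enum (S (Suc l) \<omega>) = es ! l)" for \<omega>
    using assms unfolding rha_G_def by (auto simp: list_eq_iff_nth_eq simp del: upt_Suc)
  then have "(\<lambda>\<omega>. (rha_G S N \<omega>, C m \<omega>, C (Suc m) \<omega>)) -` {(es, c, c')} \<inter> space M
      = {\<omega> \<in> space M. (\<forall>l<N. lex_enum (S (Suc l) \<omega>) = es ! l) \<and> C m \<omega> = c \<and> C (Suc m) \<omega> = c'}"
    by auto
  also have "\<dots> = (\<Inter>i\<in>J. ev i)"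
    unfolding J_def ev_def by (auto simp: rha_vars_def)
  also have "prob \<dots> = (\<Prod>i\<in>J. prob (ev i))"
    unfolding ev_def J_def by (rule indep_varsD[OF indep]) auto
  also have "\<dots> = (\<Prod>i\<in>(\<lambda>l. Inl (Suc l)) ` {..<N}. prob (ev i)) * prob (ev (Inr m)) * prob (ev (Inr (Suc m)))"
    unfolding J_def by (subst prod.union_disjoint) auto
  also have "\<dots> = (\<Prod>l<N. pmf (enum_pmf k (Suc l)) (es ! l)) * pmf (index_pmf k m) c * pmf (index_pmf k (Suc m)) c'"
  proof -
    have "ev (Inl (Suc l)) = S (Suc l) -` {A. lex_enum A = es ! l} \<inter> space M" for l
      unfolding ev_def by (auto simp: rha_vars_def)
    then have "prob (ev (Inl (Suc l))) = pmf (enum_pmf k (Suc l)) (es ! l)" for l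
      by (simp only: prob_lex_enum_S)
    moreover have "ev (Inr r) = C r -` {if r = m then c else c'} \<inter> space M" for r
      unfolding ev_def by (auto simp: rha_vars_def)
    then have "prob (ev (Inr r)) = pmf (index_pmf k r) (if r = m then c else c')" for r
      by (simp only: prob_C)
    ultimately show ?thesis by (subst prod.reindex) (simp_all add: inj_on_def)
  qed
  finally show ?thesis .
qed

lemma prob_rha_G_indices:
  "prob ((\<lambda>\<omega>. (rha_G S N \<omega>, C m \<omega>, C (Suc m) \<omega>)) -` {v} \<inter> space M)
    = pmf (pair_pmf (rha_G_pmf k N) (pair_pmf (index_pmf k m) (index_pmf k (Suc m)))) v"
proof -
  obtain es c c' where v: "v = (es, c, c')" by (cases v)
  show ?thesis
  proof (cases "length es = N")
    case True
    then show ?thesis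
      by (simp add: v prob_rha_G_indices_eq_prod pmf_pair pmf_listprod_pmf rha_G_pmf_def del: upt_Suc)
  next
    case False
    then have "(\<lambda>\<omega>. (rha_G S N \<omega>, C m \<omega>, C (Suc m) \<omega>)) -` {v} \<inter> space M = {}"
      by (auto simp: v rha_G_def)
    then show ?thesis using False by (simp add: v pmf_pair pmf_listprod_pmf rha_G_pmf_def del: upt_Suc)
  qed
qed

lemma distr_rha_G_indices:
  "distr M (count_space UNIV) (\<lambda>\<omega>. (rha_G S N \<omega>, C m \<omega>, C (Suc m) \<omega>))
     = measure_pmf (pair_pmf (rha_G_pmf k N) (pair_pmf (index_pmf k m) (index_pmf k (Suc m))))"
  using measurable_rha_G_indices prob_rha_G_indices by (rule distr_eq_measure_pmfI)

end

section \<open>Blocks of the process\<close>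

context rha_process
begin

abbreviation block_triple :: "nat \<Rightarrow> nat \<Rightarrow> 'a \<Rightarrow> nat list \<times> nat list \<times> (nat \<times> nat) list list" where
  "block_triple n j \<equiv> \<lambda>\<omega>. (rha_block S C n j \<omega>, rha_block S C n (j + 1) \<omega>, rha_G S n \<omega>)"

abbreviation block_triple_pmf :: "nat \<Rightarrow> (nat list \<times> nat list \<times> (nat \<times> nat) list list) pmf" where
  "block_triple_pmf n \<equiv> cond_uniform_pmf (rha_G_pmf k n) (\<lambda>g. rha_word g n) {1..k n}"

lemma block_triple_law_if_descend:
  assumes V: "map_pmf (\<lambda>(s, cc). V s cc)
       (pair_pmf (enums_pmf k n (Suc d)) (pair_pmf (index_pmf k (n + d)) (index_pmf k (Suc (n + d)))))
     = index_pair_pmf k n"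
    and blocks: "\<And>\<omega>. rha_block S C n j \<omega> = rha_word (rha_G S (n + Suc d) \<omega>) n
       (fst (V (drop n (rha_G S (n + Suc d) \<omega>)) (C (n + d) \<omega>, C (Suc (n + d)) \<omega>)))"
      "\<And>\<omega>. rha_block S C n (j + 1) \<omega> = rha_word (rha_G S (n + Suc d) \<omega>) n
       (snd (V (drop n (rha_G S (n + Suc d) \<omega>)) (C (n + d) \<omega>, C (Suc (n + d)) \<omega>)))"
  shows "block_triple n j \<in> measurable M (count_space UNIV) \<and>
    distr M (count_space UNIV) (block_triple n j) = measure_pmf (block_triple_pmf n)"
proof -
  let ?T = "\<lambda>\<omega>. (rha_G S (n + Suc d) \<omega>, C (n + d) \<omega>, C (Suc (n + d)) \<omega>)"
  let ?\<Phi> = "\<lambda>(es, cc). (rha_word es n (fst (V (drop n es) cc)), rha_word es n (snd (V (drop n es) cc)), take n es)"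
  have "take n (rha_G S (n + Suc d) \<omega>) = rha_G S n \<omega>" for \<omega>
    by (simp add: rha_G_def take_map del: upt_Suc)
  then have \<Phi>T: "block_triple n j = (\<lambda>\<omega>. ?\<Phi> (?T \<omega>))"
    unfolding blocks by simp
  have "block_triple n j \<in> measurable M (count_space UNIV)"
    unfolding \<Phi>T using measurable_rha_G_indices by (rule measurable_compose) simp
  moreover have "distr M (count_space UNIV) (block_triple n j) = measure_pmf (block_triple_pmf n)"
    unfolding \<Phi>T distr_comp_eq_map_pmf[OF measurable_rha_G_indices distr_rha_G_indices]
    using map_pmf_rha_words_of_indices[OF V]
    by (simp add: add_Suc_right cond_uniform_pmf_def index_pair_pmf_def)
  ultimately show ?thesis ..
qed

lemma block_triple_law_same_word:
  assumes j: "2 ^ d \<le> j" "Suc j < 2 ^ Suc d"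
  shows "block_triple n j \<in> measurable M (count_space UNIV) \<and>
    distr M (count_space UNIV) (block_triple n j) = measure_pmf (block_triple_pmf n)"
proof (rule block_triple_law_if_descend)
  let ?t = "j - 2 ^ d"
  let ?V = "\<lambda>s (c :: nat, c' :: nat). (descend s d ?t c, descend s d (Suc ?t) c)"
  have j': "2 ^ d \<le> j + 1" "j + 1 < 2 ^ Suc d" "j + 1 - 2 ^ d = Suc ?t" and t: "Suc ?t < 2 ^ d"
    and N: "n + d \<le> n + Suc d"
    using j by simp_all
  show "map_pmf (\<lambda>(s, cc). ?V s cc)
     (pair_pmf (enums_pmf k n (Suc d)) (pair_pmf (index_pmf k (n + d)) (index_pmf k (Suc (n + d)))))
     = index_pair_pmf k n"
    using map_pmf_same_word_indices[OF t, of n] by (simp add: case_prod_unfold)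
  fix \<omega>
  show "rha_block S C n j \<omega> = rha_word (rha_G S (n + Suc d) \<omega>) n
     (fst (?V (drop n (rha_G S (n + Suc d) \<omega>)) (C (n + d) \<omega>, C (Suc (n + d)) \<omega>)))"
    using rha_block_eq_descend[OF j(1) _ N, of S C \<omega>] j by simp
  show "rha_block S C n (j + 1) \<omega> = rha_word (rha_G S (n + Suc d) \<omega>) n
     (snd (?V (drop n (rha_G S (n + Suc d) \<omega>)) (C (n + d) \<omega>, C (Suc (n + d)) \<omega>)))"
    using rha_block_eq_descend[OF j'(1,2) N, of S C \<omega>] j'(3) by simp
qed

lemma block_triple_law_next_word:
  assumes j: "2 ^ d \<le> j" "j + 1 = 2 ^ Suc d"
  shows "block_triple n j \<in> measurable M (count_space UNIV) \<and>
    distr M (count_space UNIV) (block_triple n j) = measure_pmf (block_triple_pmf n)"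
proof (rule block_triple_law_if_descend)
  let ?V = "\<lambda>s (c :: nat, c' :: nat). (descend s d (2 ^ d - 1) c, descend s (Suc d) 0 c')"
  have j': "j - 2 ^ d = 2 ^ d - 1" "2 ^ Suc d \<le> j + 1" "j + 1 < 2 ^ Suc (Suc d)" "j < 2 ^ Suc d"
    and N: "n + d \<le> n + Suc d" "n + Suc d \<le> n + Suc d"
    using j by simp_all
  show "map_pmf (\<lambda>(s, cc). ?V s cc)
     (pair_pmf (enums_pmf k n (Suc d)) (pair_pmf (index_pmf k (n + d)) (index_pmf k (Suc (n + d)))))
     = index_pair_pmf k n"
    using map_pmf_next_word_indices[of d n] by (simp add: case_prod_unfold)
  fix \<omega>
  show "rha_block S C n j \<omega> = rha_word (rha_G S (n + Suc d) \<omega>) n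
     (fst (?V (drop n (rha_G S (n + Suc d) \<omega>)) (C (n + d) \<omega>, C (Suc (n + d)) \<omega>)))"
    using rha_block_eq_descend[OF j(1) j'(4) N(1), of S C \<omega>] j'(1) by simp
  show "rha_block S C n (j + 1) \<omega> = rha_word (rha_G S (n + Suc d) \<omega>) n
     (snd (?V (drop n (rha_G S (n + Suc d) \<omega>)) (C (n + d) \<omega>, C (Suc (n + d)) \<omega>)))"
    using rha_block_eq_descend[OF j'(2,3) N(2), of S C \<omega>] j(2) by simp
qed

lemma block_triple_law:
  assumes "1 \<le> j"
  shows "block_triple n j \<in> measurable M (count_space UNIV)"
    and "distr M (count_space UNIV) (block_triple n j) = measure_pmf (block_triple_pmf n)"
proof -
  obtain d where d: "2 ^ d \<le> j" "j < 2 ^ Suc d" using ex_power_ivl1[of 2 j] assms by auto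
  then consider "Suc j < 2 ^ Suc d" | "j + 1 = 2 ^ Suc d" by linarith
  then have "block_triple n j \<in> measurable M (count_space UNIV) \<and>
    distr M (count_space UNIV) (block_triple n j) = measure_pmf (block_triple_pmf n)"
    using block_triple_law_same_word[OF d(1)] block_triple_law_next_word[OF d(1)] by cases
  then show "block_triple n j \<in> measurable M (count_space UNIV)"
    and "distr M (count_space UNIV) (block_triple n j) = measure_pmf (block_triple_pmf n)" by simp_all
qed

lemma rha_blocks_information:
  assumes "1 \<le> j"
  shows "conditional_entropy (exp 1) (count_space UNIV) (count_space UNIV) (rha_block S C n j) (rha_G S n)
      = ln (real (k n))"
    and "conditional_mutual_information (exp 1) (count_space UNIV) (count_space UNIV) (count_space UNIV)
      (rha_block S C n j) (rha_block S C n (j + 1)) (rha_G S n) = 0"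
proof -
  have V: "finite {1..k n}" "{1..k n} \<noteq> {}" using k_pos[of n] by auto
  note cond_uniform = V inj_on_rha_word prob_space_axioms block_triple_law[OF assms]
  show "conditional_entropy (exp 1) (count_space UNIV) (count_space UNIV) (rha_block S C n j) (rha_G S n)
      = ln (real (k n))"
    using conditional_entropy_cond_uniform_pmf[OF cond_uniform] by simp
  show "conditional_mutual_information (exp 1) (count_space UNIV) (count_space UNIV) (count_space UNIV)
      (rha_block S C n j) (rha_block S C n (j + 1)) (rha_G S n) = 0"
    using conditional_mutual_information_cond_uniform_pmf[OF cond_uniform finite_set_rha_G_pmf] .
qed

end

theorem proposition6:
  fixes M :: "'a measure"
    and k :: "nat \<Rightarrow> nat"
    and S :: "nat \<Rightarrow> 'a \<Rightarrow> (nat \<times> nat) set"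
    and C :: "nat \<Rightarrow> 'a \<Rightarrow> nat"
  assumes P: "prob_space M"
    and k_pos: "\<And>n. 0 < k n"
    and k_lower: "\<And>n. n \<ge> 1 \<Longrightarrow> k (n - 1) \<le> k n"
    and k_upper: "\<And>n. n \<ge> 1 \<Longrightarrow> k n \<le> (k (n - 1))\<^sup>2"
    and S_rv: "\<And>n. n \<ge> 1 \<Longrightarrow> S n \<in> measurable M (count_space UNIV)"
    and S_distr: "\<And>n. n \<ge> 1 \<Longrightarrow>
       distr M (count_space UNIV) (S n) = measure_pmf (pmf_of_set (rha_subsets (k (n - 1)) (k n)))"
    and C_rv: "\<And>n. C n \<in> measurable M (count_space UNIV)"
    and C_distr: "\<And>n. distr M (count_space UNIV) (C n) = measure_pmf (pmf_of_set {1..k n})"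
    and indep: "prob_space.indep_vars M (\<lambda>_. count_space UNIV) (rha_vars S C)
                  (Inl ` {1..} \<union> range Inr)"
  shows "\<forall>n j. j \<ge> 1 \<longrightarrow>
      prob_space.conditional_entropy M (exp 1) (count_space UNIV) (count_space UNIV)
        (rha_block S C n j) (rha_G S n) = ln (real (k n))
    \<and> prob_space.conditional_mutual_information M (exp 1)
        (count_space UNIV) (count_space UNIV) (count_space UNIV)
        (rha_block S C n j) (rha_block S C n (j + 1)) (rha_G S n) = 0"
proof (intro allI impI)
  fix n j :: nat
  assume "1 \<le> j"
  have "k (Suc l) \<le> (k l)\<^sup>2" for l using k_upper[of "Suc l"] by simp
  then interpret rha_process M k S C
    using P k_pos S_rv S_distr C_rv C_distr indep
    by (simp add: rha_process_def rha_process_axioms_def perplexities_def)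
  show "conditional_entropy (exp 1) (count_space UNIV) (count_space UNIV) (rha_block S C n j) (rha_G S n)
      = ln (real (k n))
    \<and> conditional_mutual_information (exp 1) (count_space UNIV) (count_space UNIV) (count_space UNIV)
      (rha_block S C n j) (rha_block S C n (j + 1)) (rha_G S n) = 0"
    using rha_blocks_information[OF \<open>1 \<le> j\<close>] ..
qed

end
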